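(* Let $n\geqslant 2$. The set $\{x_1,x_2,\ldots,x_n\}$ generates the monoid $\mathcal{AO}_n$.
   Context: Let $\Omega_n=\{1<2<\cdots<n\}$ and $\mathcal{I}_n$ the monoid of all partial injective maps of $\Omega_n$, composed left to right. $\mathcal{AI}_n$ is the set of all $\alpha\in\mathcal{I}_n$ with $\alpha=\sigma|_{\mathrm{Dom}(\alpha)}$ for some even permutation $\sigma$; $\mathcal{POI}_n$ is the set of order-preserving elements and $\mathcal{AO}_n=\mathcal{AI}_n\cap\mathcal{POI}_n$. Let $X_i=\Omega_n\setminus\{i\}$. For subsets $A,B$ with $|A|=|B|$ there is a unique order-preserving partial permutation with domain $A$ and image $B$. Define $x_1,\dots,x_n$ as the order-preserving partial permutations with: $x_1$: domain $X_1$, image $X_n$ if $n$ is odd and image $X_{n-1}$ if $n$ is even; $x_2$: domain $X_2$, image $X_{n-1}$ if $n$ is odd and image $X_n$ if $n$ is even; $x_i$ ($3\leqslant i\leqslant n$): domain $X_i$, image $X_{i-2}$. *)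

theory Defs
  imports "HOL-Combinatorics.Permutations"
begin

text \<open>Partial maps of \<Omega>_n = {1..n} are represented as nat \<Rightarrow> nat option.\<close>

definition PI :: "nat \<Rightarrow> (nat \<Rightarrow> nat option) set" where
  "PI n = {\<alpha>. dom \<alpha> \<subseteq> {1..n} \<and> ran \<alpha> \<subseteq> {1..n} \<and> inj_on \<alpha> (dom \<alpha>)}"

text \<open>Composition left to right: first \<alpha>, then \<beta>.\<close>
definition pcomp :: "(nat \<Rightarrow> nat option) \<Rightarrow> (nat \<Rightarrow> nat option) \<Rightarrow> (nat \<Rightarrow> nat option)" where
  "pcomp \<alpha> \<beta> = \<beta> \<circ>\<^sub>m \<alpha>"

definition pid :: "nat \<Rightarrow> (nat \<Rightarrow> nat option)" where
  "pid n = (\<lambda>x. if x \<in> {1..n} then Some x else None)"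

definition AI :: "nat \<Rightarrow> (nat \<Rightarrow> nat option) set" where
  "AI n = {\<alpha> \<in> PI n. \<exists>\<sigma>. \<sigma> permutes {1..n} \<and> evenperm \<sigma> \<and>
                         (\<forall>x\<in>dom \<alpha>. \<alpha> x = Some (\<sigma> x))}"

definition POI :: "nat \<Rightarrow> (nat \<Rightarrow> nat option) set" where
  "POI n = {\<alpha> \<in> PI n. \<forall>x\<in>dom \<alpha>. \<forall>y\<in>dom \<alpha>. x \<le> y \<longrightarrow> the (\<alpha> x) \<le> the (\<alpha> y)}"

definition AO :: "nat \<Rightarrow> (nat \<Rightarrow> nat option) set" where
  "AO n = AI n \<inter> POI n"

text \<open>The order-preserving partial permutation with domain A and image B (|A| = |B|).\<close>
definition opp :: "nat set \<Rightarrow> nat set \<Rightarrow> (nat \<Rightarrow> nat option)" where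
  "opp A B = map_of (zip (sorted_list_of_set A) (sorted_list_of_set B))"

definition Xs :: "nat \<Rightarrow> nat \<Rightarrow> nat set" where
  "Xs n i = {1..n} - {i}"

definition xgen :: "nat \<Rightarrow> nat \<Rightarrow> (nat \<Rightarrow> nat option)" where
  "xgen n i =
     (if i = 1 then opp (Xs n 1) (if odd n then Xs n n else Xs n (n - 1))
      else if i = 2 then opp (Xs n 2) (if odd n then Xs n (n - 1) else Xs n n)
      else opp (Xs n i) (Xs n (i - 2)))"

inductive_set generated :: "nat \<Rightarrow> (nat \<Rightarrow> nat option) set \<Rightarrow> (nat \<Rightarrow> nat option) set"
  for n G where
  gen_id: "pid n \<in> generated n G"
| gen_step: "\<alpha> \<in> generated n G \<Longrightarrow> g \<in> G \<Longrightarrow> pcomp \<alpha> g \<in> generated n G"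

end

theory Submission
  imports Defs
begin

text \<open>
  An order-preserving partial injection is determined by its domain and its image. The generator
  x_i maps X_i onto X_j with j = i - 2 (wrapping around to the top of the parity class of i when
  i \<le> 2); it is the restriction of a cycle of length |i - j| + 1, which is an even permutation
  iff i + j is even. Along each parity class the x_i form a single cycle, so their products give
  every map X_i \<rightarrow> X_j with i \<equiv> j mod 2, and these are all elements of AO_n of rank n - 1,
  because the even permutation extending such a map is forced to be the cycle.
  For rank at most n - 2 the parity constraint disappears: composing a partial identity on the
  right with the maps X_i \<rightarrow> X_(i+2) moves its image to any set of the same size, since every
  set other than an initial segment has a hole i \<le> n - 2 followed within two steps by an
  element, and such a move lowers the sum of the image.
\<close>

section \<open>Order-preserving partial injections\<close>

lemma ran_eq_image_the: "ran m = (\<lambda>x. the (m x)) ` dom m"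
  by (force simp: ran_def dom_def)

lemma sorted_list_of_set_image_strict_mono:
  assumes "finite A" "strict_mono_on A f"
  shows "sorted_list_of_set (f ` A) = map f (sorted_list_of_set A)"
proof -
  have "sorted_wrt (<) (map f (sorted_list_of_set A))"
    unfolding sorted_wrt_map
    by (rule sorted_wrt_mono_rel[rotated, of "(<)"]) (use assms in \<open>auto simp: strict_mono_on_def\<close>)
  then show ?thesis
    using assms(1) by (intro strict_sorted_equal) simp_all
qed

lemma opp_eqI:
  assumes "finite (dom \<beta>)" "strict_mono_on (dom \<beta>) (\<lambda>x. the (\<beta> x))"
  shows "opp (dom \<beta>) (ran \<beta>) = \<beta>"
  unfolding opp_def ran_eq_image_the sorted_list_of_set_image_strict_mono[OF assms] map_of_zip_map
  using assms(1) by (auto simp: fun_eq_iff dom_def)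

lemma PI_finite_dom: "\<alpha> \<in> PI n \<Longrightarrow> finite (dom \<alpha>)"
  unfolding PI_def using finite_subset by blast

lemma POI_strict_mono:
  assumes "\<alpha> \<in> POI n"
  shows "strict_mono_on (dom \<alpha>) (\<lambda>x. the (\<alpha> x))"
proof (rule strict_mono_onI)
  fix x y assume xy: "x \<in> dom \<alpha>" "y \<in> dom \<alpha>" "x < y"
  then have "\<alpha> x \<noteq> \<alpha> y"
    using assms unfolding POI_def PI_def inj_on_def by (blast dest: less_imp_neq)
  moreover have "the (\<alpha> x) \<le> the (\<alpha> y)"
    using assms xy unfolding POI_def by auto
  ultimately show "the (\<alpha> x) < the (\<alpha> y)"
    using xy(1,2) by (auto simp: dom_def)
qed

lemma opp_dom_ran: "\<alpha> \<in> POI n \<Longrightarrow> opp (dom \<alpha>) (ran \<alpha>) = \<alpha>"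
  by (intro opp_eqI POI_strict_mono PI_finite_dom[of \<alpha> n]) (auto simp: POI_def)

lemma POI_eqI:
  assumes "\<alpha> \<in> POI n" "\<beta> \<in> POI n" "dom \<alpha> = dom \<beta>" "ran \<alpha> = ran \<beta>"
  shows "\<alpha> = \<beta>"
  using opp_dom_ran[OF assms(1)] opp_dom_ran[OF assms(2)] unfolding assms(3,4) by simp

lemma card_ran_PI: "\<alpha> \<in> PI n \<Longrightarrow> card (ran \<alpha>) = card (dom \<alpha>)"
  unfolding ran_eq_image_the PI_def
  by (intro card_image inj_onI) (auto simp: inj_on_def dom_def)

lemma pid_eq_restrict: "pid n = Some |` {1..n}"
  by (simp add: pid_def restrict_map_def)

lemma pcomp_assoc: "pcomp (pcomp \<alpha> \<beta>) \<gamma> = pcomp \<alpha> (pcomp \<beta> \<gamma>)"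
  by (auto simp: pcomp_def map_comp_def fun_eq_iff split: option.splits)

lemma pcomp_pid_left:
  assumes "dom \<alpha> \<subseteq> {1..n}"
  shows "pcomp (pid n) \<alpha> = \<alpha>"
proof
  fix x
  have "\<alpha> x = None" if "x \<notin> {1..n}"
    using assms that by (auto simp: dom_def)
  then show "pcomp (pid n) \<alpha> x = \<alpha> x"
    by (simp add: pcomp_def pid_def map_comp_def)
qed

lemma pcomp_pid_right: "ran \<alpha> \<subseteq> {1..n} \<Longrightarrow> pcomp \<alpha> (pid n) = \<alpha>"
  by (auto simp: pcomp_def pid_def map_comp_def fun_eq_iff ran_def split: option.splits)

lemma pcomp_restrict_Some: "pcomp (Some |` A) (Some |` B) = Some |` (A \<inter> B)"
  by (auto simp: pcomp_def restrict_map_def map_comp_def fun_eq_iff)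

lemma dom_pcomp: "dom (pcomp \<alpha> \<beta>) = {x \<in> dom \<alpha>. the (\<alpha> x) \<in> dom \<beta>}"
  by (auto simp: pcomp_def map_comp_def split: option.splits)

lemma pcomp_apply: "x \<in> dom \<alpha> \<Longrightarrow> pcomp \<alpha> \<beta> x = \<beta> (the (\<alpha> x))"
  by (auto simp: pcomp_def)

lemma pid_PI: "pid n \<in> PI n"
  by (auto simp: PI_def pid_def ran_def inj_on_def split: if_splits)

lemma PI_pcomp:
  assumes "\<alpha> \<in> PI n" "\<beta> \<in> PI n"
  shows "pcomp \<alpha> \<beta> \<in> PI n"
proof -
  have "dom (pcomp \<alpha> \<beta>) \<subseteq> dom \<alpha>" "ran (pcomp \<alpha> \<beta>) \<subseteq> ran \<beta>"
    by (auto simp: pcomp_def ran_def map_comp_Some_iff)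
  moreover have "inj_on (pcomp \<alpha> \<beta>) (dom (pcomp \<alpha> \<beta>))"
  proof (rule inj_onI)
    fix x y assume xy: "x \<in> dom (pcomp \<alpha> \<beta>)" "y \<in> dom (pcomp \<alpha> \<beta>)"
      and "pcomp \<alpha> \<beta> x = pcomp \<alpha> \<beta> y"
    then have "\<beta> (the (\<alpha> x)) = \<beta> (the (\<alpha> y))"
      by (simp add: dom_pcomp pcomp_apply)
    then have "\<alpha> x = \<alpha> y"
      using assms(2) xy unfolding PI_def dom_pcomp inj_on_def by (auto simp: dom_def)
    then show "x = y"
      using assms(1) xy unfolding PI_def dom_pcomp inj_on_def by blast
  qed
  ultimately show ?thesis
    using assms unfolding PI_def by blast
qed

lemma POI_pcomp:
  assumes "\<alpha> \<in> POI n" "\<beta> \<in> POI n"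
  shows "pcomp \<alpha> \<beta> \<in> POI n"
  unfolding POI_def
proof (intro CollectI conjI ballI impI)
  show "pcomp \<alpha> \<beta> \<in> PI n"
    using assms PI_pcomp unfolding POI_def by blast
  fix x y assume "x \<in> dom (pcomp \<alpha> \<beta>)" "y \<in> dom (pcomp \<alpha> \<beta>)" "x \<le> y"
  then have x: "x \<in> dom \<alpha>" "the (\<alpha> x) \<in> dom \<beta>" and y: "y \<in> dom \<alpha>" "the (\<alpha> y) \<in> dom \<beta>"
    and "the (\<alpha> x) \<le> the (\<alpha> y)"
    using assms(1) unfolding POI_def dom_pcomp by auto
  then have "the (\<beta> (the (\<alpha> x))) \<le> the (\<beta> (the (\<alpha> y)))"
    using assms(2) unfolding POI_def by auto
  then show "the (pcomp \<alpha> \<beta> x) \<le> the (pcomp \<alpha> \<beta> y)"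
    using x y by (simp add: pcomp_apply)
qed

lemma AI_pcomp:
  assumes "\<alpha> \<in> AI n" "\<beta> \<in> AI n"
  shows "pcomp \<alpha> \<beta> \<in> AI n"
proof -
  obtain \<sigma> where \<sigma>: "\<sigma> permutes {1..n}" "evenperm \<sigma>" "\<forall>x\<in>dom \<alpha>. \<alpha> x = Some (\<sigma> x)"
    using assms(1) unfolding AI_def by blast
  obtain \<tau> where \<tau>: "\<tau> permutes {1..n}" "evenperm \<tau>" "\<forall>x\<in>dom \<beta>. \<beta> x = Some (\<tau> x)"
    using assms(2) unfolding AI_def by blast
  have "evenperm (\<tau> \<circ> \<sigma>)"
    using \<sigma> \<tau> by (simp add: evenperm_comp permutes_imp_permutation[of "{1..n}"])
  moreover have "pcomp \<alpha> \<beta> x = Some ((\<tau> \<circ> \<sigma>) x)" if "x \<in> dom (pcomp \<alpha> \<beta>)" for x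
  proof -
    have "x \<in> dom \<alpha>" "the (\<alpha> x) \<in> dom \<beta>"
      using that by (auto simp: dom_pcomp)
    moreover from this(1) have "the (\<alpha> x) = \<sigma> x"
      using \<sigma>(3) by simp
    ultimately show ?thesis
      using \<tau>(3) by (simp add: pcomp_apply)
  qed
  moreover have "pcomp \<alpha> \<beta> \<in> PI n"
    using assms PI_pcomp unfolding AI_def by blast
  ultimately show ?thesis
    using permutes_compose[OF \<sigma>(1) \<tau>(1)] unfolding AI_def by blast
qed

lemma AO_subset_PI: "AO n \<subseteq> PI n"
  by (auto simp: AO_def POI_def)

lemma AO_pcomp: "\<alpha> \<in> AO n \<Longrightarrow> \<beta> \<in> AO n \<Longrightarrow> pcomp \<alpha> \<beta> \<in> AO n"
  unfolding AO_def using AI_pcomp POI_pcomp by blast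

lemma pid_AO: "pid n \<in> AO n"
proof -
  have "\<forall>x\<in>dom (pid n). pid n x = Some x"
    by (simp add: pid_def dom_def)
  then show ?thesis
    unfolding AO_def AI_def POI_def using pid_PI by (auto intro!: exI[of _ id])
qed

lemma generated_subset:
  assumes "pid n \<in> S" "\<And>\<alpha> \<beta>. \<alpha> \<in> S \<Longrightarrow> \<beta> \<in> S \<Longrightarrow> pcomp \<alpha> \<beta> \<in> S" "G \<subseteq> S"
  shows "generated n G \<subseteq> S"
proof
  fix \<alpha> assume "\<alpha> \<in> generated n G"
  then show "\<alpha> \<in> S"
    by induction (use assms in blast)+
qed

lemma generated_pcomp:
  assumes "G \<subseteq> PI n" "\<alpha> \<in> generated n G" "\<beta> \<in> generated n G"
  shows "pcomp \<alpha> \<beta> \<in> generated n G"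
  using assms(3)
proof induction
  case gen_id
  have "\<alpha> \<in> PI n"
    using generated_subset[OF pid_PI PI_pcomp assms(1)] assms(2) by blast
  then show ?case
    using assms(2) by (simp add: pcomp_pid_right PI_def)
next
  case (gen_step \<gamma> g)
  then show ?case
    by (metis pcomp_assoc generated.gen_step)
qed

lemma generated_base:
  assumes "G \<subseteq> PI n" "g \<in> G"
  shows "g \<in> generated n G"
proof -
  have "dom g \<subseteq> {1..n}"
    using assms unfolding PI_def by blast
  then show ?thesis
    using generated.gen_step[OF generated.gen_id[of n G] assms(2)] by (simp add: pcomp_pid_left)
qed

section \<open>Cycles and the maps X_i \<rightarrow> X_j\<close>

text \<open>Off the point i, \<open>cyc i j\<close> is the order isomorphism from \<open>- {i}\<close> onto \<open>- {j}\<close>.\<close>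

definition cyc :: "nat \<Rightarrow> nat \<Rightarrow> nat \<Rightarrow> nat" where
  "cyc i j k =
     (if k = i then j else if i < k \<and> k \<le> j then k - 1 else if j \<le> k \<and> k < i then k + 1 else k)"

lemma cyc_cyc: "cyc j l (cyc i j k) = cyc i l k"
  by (auto simp: cyc_def)

lemma cyc_comp: "cyc j l \<circ> cyc i j = cyc i l"
  by (simp add: fun_eq_iff cyc_cyc)

lemma cyc_at: "cyc i j i = j"
  by (simp add: cyc_def)

lemma cyc_self: "cyc i i = id"
  by (auto simp: cyc_def fun_eq_iff)

lemma cyc_Suc: "cyc i (Suc i) = transpose i (Suc i)"
  by (auto simp: cyc_def fun_eq_iff transpose_def)

lemma inv_cyc: "inv (cyc i j) = cyc j i"
  by (rule inv_unique_comp) (simp_all add: cyc_comp cyc_self)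

lemma evenperm_cyc_up: "permutation (cyc i (i + m)) \<and> (evenperm (cyc i (i + m)) \<longleftrightarrow> even m)"
proof (induction m)
  case 0
  then show ?case
    by (simp add: cyc_self)
next
  case (Suc m)
  have split: "cyc i (i + Suc m) = transpose (i + m) (Suc (i + m)) \<circ> cyc i (i + m)"
    by (simp flip: cyc_Suc add: cyc_comp)
  have swap: "permutation (transpose (i + m) (Suc (i + m)))"
    by (rule permutation_swap_id)
  have cyc: "permutation (cyc i (i + m))"
    using Suc by blast
  have "evenperm (transpose (i + m) (Suc (i + m)) \<circ> cyc i (i + m)) \<longleftrightarrow> even (Suc m)"
    using evenperm_comp[OF swap cyc] Suc by (simp add: evenperm_swap)
  then show ?case
    unfolding split using permutation_compose[OF swap cyc] by blast
qed

lemma evenperm_cyc: "permutation (cyc i j) \<and> (evenperm (cyc i j) \<longleftrightarrow> even (i + j))"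
proof (cases "i \<le> j")
  case True
  then obtain m where "j = i + m"
    using le_Suc_ex by blast
  moreover have "even (i + (i + m)) \<longleftrightarrow> even m"
    by presburger
  ultimately show ?thesis
    using evenperm_cyc_up[of i m] by simp
next
  case False
  then obtain m where "i = j + m"
    using le_Suc_ex[of j i] by auto
  then have "cyc i j = inv (cyc j (j + m))"
    by (simp add: inv_cyc)
  moreover have "even (i + j) \<longleftrightarrow> even m"
    using \<open>i = j + m\<close> by presburger
  ultimately show ?thesis
    using evenperm_cyc_up[of j m] by (simp add: permutation_inverse evenperm_inv)
qed

lemma bij_cyc: "bij (cyc i j)"
  using evenperm_cyc permutation_bijective by blast

lemma inj_on_cyc: "inj_on (cyc i j) A"
  using bij_is_inj[OF bij_cyc] by (rule inj_on_subset) simp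

lemma cyc_permutes:
  assumes "i \<in> {1..n}" "j \<in> {1..n}"
  shows "cyc i j permutes {1..n}"
proof -
  note bij_cyc
  moreover have "cyc i j x = x" if "x \<notin> {1..n}" for x
    using assms that by (auto simp: cyc_def)
  ultimately show ?thesis
    by (simp add: permutes_def bij_iff)
qed

lemma cyc_strict_mono: "strict_mono_on (- {i}) (cyc i j)"
  by (auto simp: strict_mono_on_def cyc_def)

definition shift_map :: "nat \<Rightarrow> nat \<Rightarrow> nat \<Rightarrow> nat \<Rightarrow> nat option" where
  "shift_map n i j = (Some \<circ> cyc i j) |` Xs n i"

lemma dom_shift_map: "dom (shift_map n i j) = Xs n i"
  by (auto simp: shift_map_def dom_def restrict_map_def split: if_splits)

lemma ran_shift_map:
  assumes "i \<in> {1..n}" "j \<in> {1..n}"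
  shows "ran (shift_map n i j) = Xs n j"
proof -
  have "ran (shift_map n i j) = cyc i j ` Xs n i"
    by (force simp: shift_map_def ran_def restrict_map_def)
  also have "\<dots> = cyc i j ` {1..n} - {cyc i j i}"
    unfolding Xs_def using cyc_permutes[OF assms] by (simp add: image_set_diff permutes_inj)
  also have "\<dots> = Xs n j"
    using cyc_permutes[OF assms] by (simp add: permutes_image Xs_def cyc_at)
  finally show ?thesis .
qed

lemma shift_map_POI:
  assumes "i \<in> {1..n}" "j \<in> {1..n}"
  shows "shift_map n i j \<in> POI n"
  unfolding POI_def PI_def
proof (intro CollectI conjI ballI impI)
  show "dom (shift_map n i j) \<subseteq> {1..n}" "ran (shift_map n i j) \<subseteq> {1..n}"
    by (auto simp: dom_shift_map ran_shift_map[OF assms] Xs_def)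
  have "inj (cyc i j)"
    by (rule inj_on_cyc)
  then show "inj_on (shift_map n i j) (dom (shift_map n i j))"
    by (auto simp: inj_on_def inj_def shift_map_def restrict_map_def split: if_splits)
  fix x y assume "x \<in> dom (shift_map n i j)" "y \<in> dom (shift_map n i j)" "x \<le> y"
  then have "x \<in> Xs n i" "y \<in> Xs n i" "cyc i j x \<le> cyc i j y"
    using strict_mono_on_leD[OF cyc_strict_mono, of x i y j] by (auto simp: dom_shift_map Xs_def)
  then show "the (shift_map n i j x) \<le> the (shift_map n i j y)"
    by (simp add: shift_map_def)
qed

lemma shift_map_AO:
  assumes "i \<in> {1..n}" "j \<in> {1..n}" "even (i + j)"
  shows "shift_map n i j \<in> AO n"
  unfolding AO_def AI_def
  using shift_map_POI[OF assms(1,2)] cyc_permutes[OF assms(1,2)] evenperm_cyc[of i j] assms(3)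
  by (auto simp: POI_def shift_map_def intro!: exI[of _ "cyc i j"])

lemma pcomp_shift_map_right:
  assumes "ran \<gamma> \<subseteq> Xs n i"
  shows "pcomp \<gamma> (shift_map n i j) = map_option (cyc i j) \<circ> \<gamma>"
proof
  fix x
  show "pcomp \<gamma> (shift_map n i j) x = (map_option (cyc i j) \<circ> \<gamma>) x"
    using assms by (cases "\<gamma> x") (auto simp: pcomp_def shift_map_def ran_def)
qed

lemma pcomp_shift_map:
  assumes "i \<in> {1..n}" "j \<in> {1..n}" "l \<in> {1..n}"
  shows "pcomp (shift_map n i j) (shift_map n j l) = shift_map n i l"
proof -
  have "pcomp (shift_map n i j) (shift_map n j l) = map_option (cyc j l) \<circ> shift_map n i j"
    using assms by (simp add: pcomp_shift_map_right ran_shift_map)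
  then show ?thesis
    by (simp add: shift_map_def fun_eq_iff restrict_map_def cyc_cyc)
qed

lemma shift_map_self: "shift_map n i i = Some |` Xs n i"
  by (simp add: shift_map_def cyc_self)

text \<open>The generator \<open>xgen n i\<close> maps X_i onto X_j with \<open>j = xtarget n i\<close>; on each parity class of
  {1..n}, \<open>xtarget n\<close> is the cyclic shift i \<mapsto> i - 2 that sends the bottom element to the top.\<close>

definition xtarget :: "nat \<Rightarrow> nat \<Rightarrow> nat" where
  "xtarget n i = (if i \<le> 2 then (if even (n + i) then n else n - 1) else i - 2)"

lemma xtarget_mem: "n \<ge> 2 \<Longrightarrow> i \<in> {1..n} \<Longrightarrow> xtarget n i \<in> {1..n}"
  by (auto simp: xtarget_def)

lemma even_add_xtarget: "n \<ge> 1 \<Longrightarrow> even (i + xtarget n i)"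
  by (auto simp: xtarget_def)

lemma xgen_eq_shift_map:
  assumes "n \<ge> 2" "i \<in> {1..n}"
  shows "xgen n i = shift_map n i (xtarget n i)"
proof -
  have t: "xtarget n i \<in> {1..n}"
    using assms by (rule xtarget_mem)
  have "xgen n i = opp (Xs n i) (Xs n (xtarget n i))"
    using assms(2) by (auto simp: xgen_def xtarget_def)
  also have "\<dots> = shift_map n i (xtarget n i)"
    using opp_dom_ran[OF shift_map_POI[OF assms(2) t]]
    by (simp add: dom_shift_map ran_shift_map[OF assms(2) t])
  finally show ?thesis .
qed

abbreviation xgens :: "nat \<Rightarrow> (nat \<Rightarrow> nat option) set" where
  "xgens n \<equiv> {xgen n i | i. i \<in> {1..n}}"

lemma xgens_AO: "n \<ge> 2 \<Longrightarrow> xgens n \<subseteq> AO n"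
  using xgen_eq_shift_map shift_map_AO xtarget_mem even_add_xtarget by fastforce

lemma xgens_PI: "n \<ge> 2 \<Longrightarrow> xgens n \<subseteq> PI n"
  using xgens_AO AO_subset_PI by blast

lemma generated_xgens_AO: "n \<ge> 2 \<Longrightarrow> generated n (xgens n) \<subseteq> AO n"
  using generated_subset[OF pid_AO AO_pcomp xgens_AO] .

lemma shift_map_xtarget_generated:
  assumes "n \<ge> 2" "i \<in> {1..n}"
  shows "shift_map n i (xtarget n i) \<in> generated n (xgens n)"
proof -
  have "xgen n i \<in> generated n (xgens n)"
    using assms(2) by (intro generated_base[OF xgens_PI[OF assms(1)]]) blast
  then show ?thesis
    using xgen_eq_shift_map[OF assms] by simp
qed

lemma xtarget_funpow_mem: "n \<ge> 2 \<Longrightarrow> i \<in> {1..n} \<Longrightarrow> (xtarget n ^^ m) i \<in> {1..n}"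
proof (induction m)
  case (Suc m)
  then show ?case
    using xtarget_mem[of n "(xtarget n ^^ m) i"] by simp
qed simp

lemma xtarget_funpow_descend: "1 \<le> j \<Longrightarrow> (xtarget n ^^ m) (j + 2 * m) = j"
proof (induction m)
  case (Suc m)
  have "xtarget n (j + 2 * Suc m) = j + 2 * m"
    using Suc.prems by (simp add: xtarget_def)
  then show ?case
    using Suc by (simp add: funpow_Suc_right del: funpow.simps)
qed simp

lemma xtarget_cycle:
  assumes "n \<ge> 2" "i \<in> {1..n}" "j \<in> {1..n}" "even (i + j)"
  shows "\<exists>m. (xtarget n ^^ Suc m) i = j"
proof -
  define b where "b = 2 - i mod 2"
  have "\<exists>p. i = b + 2 * p"
    using assms(2) unfolding b_def atLeastAtMost_iff by presburger
  then obtain p where p: "i = b + 2 * p" ..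
  have "\<exists>q. xtarget n b = j + 2 * q"
    using assms(1,3,4) unfolding b_def xtarget_def atLeastAtMost_iff by presburger
  then obtain q where q: "xtarget n b = j + 2 * q" ..
  have "(xtarget n ^^ (q + Suc p)) i = (xtarget n ^^ q) ((xtarget n ^^ Suc p) i)"
    by (simp only: funpow_add comp_apply)
  also have "\<dots> = (xtarget n ^^ q) (xtarget n ((xtarget n ^^ p) (b + 2 * p)))"
    by (simp add: p)
  also have "\<dots> = j"
    using xtarget_funpow_descend[where j = b and m = p] xtarget_funpow_descend[where j = j and m = q]
      assms(3) q by (simp add: b_def)
  finally show ?thesis
    by (metis add_Suc_right)
qed

lemma shift_map_funpow_generated:
  assumes "n \<ge> 2" "i \<in> {1..n}"
  shows "shift_map n i ((xtarget n ^^ Suc m) i) \<in> generated n (xgens n)"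
proof (induction m)
  case 0
  show ?case
    using shift_map_xtarget_generated[OF assms] by simp
next
  case (Suc m)
  define k where "k = (xtarget n ^^ Suc m) i"
  have k: "k \<in> {1..n}"
    unfolding k_def using assms by (rule xtarget_funpow_mem)
  have "pcomp (shift_map n i k) (shift_map n k (xtarget n k)) \<in> generated n (xgens n)"
    using Suc shift_map_xtarget_generated[OF assms(1) k] unfolding k_def
    by (intro generated_pcomp[OF xgens_PI[OF assms(1)]])
  then show ?case
    using pcomp_shift_map[OF assms(2) k xtarget_mem[OF assms(1) k]] by (simp add: k_def)
qed

lemma shift_map_generated:
  assumes "n \<ge> 2" "i \<in> {1..n}" "j \<in> {1..n}" "even (i + j)"
  shows "shift_map n i j \<in> generated n (xgens n)"
  using xtarget_cycle[OF assms] shift_map_funpow_generated[OF assms(1,2)] by blast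

lemma restrict_Some_generated:
  assumes "n \<ge> 2" "A \<subseteq> {1..n}"
  shows "Some |` A \<in> generated n (xgens n)"
proof -
  have "Some |` ({1..n} - C) \<in> generated n (xgens n)" if "C \<subseteq> {1..n}" for C
    using finite_subset[OF that finite_atLeastAtMost] that
  proof (induction rule: finite_subset_induct)
    case empty
    show ?case
      using generated.gen_id[of n] by (simp add: pid_eq_restrict)
  next
    case (insert i C)
    have "pcomp (Some |` ({1..n} - C)) (shift_map n i i) \<in> generated n (xgens n)"
      using insert assms(1) by (intro generated_pcomp[OF xgens_PI] shift_map_generated) auto
    moreover have "({1..n} - C) \<inter> Xs n i = {1..n} - insert i C"
      by (auto simp: Xs_def)
    ultimately show ?case
      by (simp add: shift_map_self pcomp_restrict_Some)
  qed
  from this[of "{1..n} - A"] show ?thesis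
    using assms(2) by (simp add: double_diff)
qed

section \<open>Moving images\<close>

text \<open>Composing a map with image A on the right with \<open>shift_map n i j\<close> (i \<notin> A, i + j even) turns its
  image into \<open>cyc i j ` A\<close> and keeps its domain.\<close>

definition range_move :: "nat \<Rightarrow> nat set \<Rightarrow> nat set \<Rightarrow> bool" where
  "range_move n A B \<longleftrightarrow>
     A \<subseteq> {1..n} \<and> (\<exists>i\<in>{1..n}. \<exists>j\<in>{1..n}. even (i + j) \<and> i \<notin> A \<and> B = cyc i j ` A)"

lemma range_move_subset:
  assumes "range_move n A B"
  shows "B \<subseteq> {1..n}"
proof -
  obtain i j where "A \<subseteq> {1..n}" "i \<in> {1..n}" "j \<in> {1..n}" "B = cyc i j ` A"
    using assms unfolding range_move_def by blast
  then show ?thesis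
    using permutes_image[OF cyc_permutes, of i n j] by blast
qed

lemma range_move_card: "range_move n A B \<Longrightarrow> card B = card A"
  unfolding range_move_def by (auto simp: card_image inj_on_cyc)

lemma symp_range_move: "symp (range_move n)"
proof (rule sympI)
  fix A B assume "range_move n A B"
  then obtain i j where ij: "A \<subseteq> {1..n}" "i \<in> {1..n}" "j \<in> {1..n}" "even (i + j)" "i \<notin> A"
    and B: "B = cyc i j ` A"
    unfolding range_move_def by blast
  have "j \<notin> B"
  proof
    assume "j \<in> B"
    then obtain x where "x \<in> A" "cyc i j x = cyc i j i"
      unfolding B by (auto simp: cyc_at)
    then show False
      using ij(5) inj_on_cyc[of i j UNIV] by (auto simp: inj_def)
  qed
  moreover have "A = cyc j i ` B"
    unfolding B image_image cyc_cyc cyc_self by simp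
  moreover have "even (j + i)"
    using ij(4) by (simp add: add.commute)
  ultimately show "range_move n B A"
    using range_move_subset[OF \<open>range_move n A B\<close>] ij(2,3) unfolding range_move_def by blast
qed

lemma range_move_generated:
  assumes "n \<ge> 2" "\<gamma> \<in> generated n (xgens n)" "range_move n (ran \<gamma>) B"
  shows "\<exists>\<gamma>'\<in>generated n (xgens n). dom \<gamma>' = dom \<gamma> \<and> ran \<gamma>' = B"
proof -
  obtain i j where ij: "ran \<gamma> \<subseteq> {1..n}" "i \<in> {1..n}" "j \<in> {1..n}" "even (i + j)" "i \<notin> ran \<gamma>"
    and B: "B = cyc i j ` ran \<gamma>"
    using assms(3) unfolding range_move_def by blast
  have "ran \<gamma> \<subseteq> Xs n i"
    using ij(1,5) by (auto simp: Xs_def)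
  then have eq: "pcomp \<gamma> (shift_map n i j) = (\<lambda>x. map_option (cyc i j) (\<gamma> x))"
    by (simp add: pcomp_shift_map_right comp_def)
  show ?thesis
  proof (intro bexI conjI)
    show "pcomp \<gamma> (shift_map n i j) \<in> generated n (xgens n)"
      using assms(1,2) ij(2-4) by (intro generated_pcomp[OF xgens_PI] shift_map_generated)
    show "dom (pcomp \<gamma> (shift_map n i j)) = dom \<gamma>"
      unfolding eq by (rule dom_map_option)
    show "ran (pcomp \<gamma> (shift_map n i j)) = B"
      unfolding eq B by (rule ran_map_option)
  qed
qed

lemma range_moves_generated:
  assumes "n \<ge> 2" "A \<subseteq> {1..n}" "(range_move n)\<^sup>*\<^sup>* A B"
  shows "\<exists>\<gamma>\<in>generated n (xgens n). dom \<gamma> = A \<and> ran \<gamma> = B"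
  using assms(3)
proof (induction rule: rtranclp_induct)
  case base
  have "dom (Some |` A) = A" "ran (Some |` A) = A"
    by (auto simp: ran_def restrict_map_def split: if_splits)
  then show ?case
    using restrict_Some_generated[OF assms(1,2)] by blast
next
  case (step B C)
  then obtain \<gamma> where "\<gamma> \<in> generated n (xgens n)" "dom \<gamma> = A" "ran \<gamma> = B"
    by blast
  then show ?case
    using range_move_generated[OF assms(1), of \<gamma> C] step(2) by simp
qed

lemma exists_hole_below_element:
  assumes "A \<subseteq> {1..n}" "A \<noteq> {1..card A}"
  obtains c a where "c \<notin> A" "1 \<le> c" "c < a" "a \<in> A"
proof -
  have fin: "finite A"
    using assms(1) finite_subset by blast
  have "\<not> A \<subseteq> {1..card A}"
  proof
    assume "A \<subseteq> {1..card A}"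
    from card_subset_eq[OF finite_atLeastAtMost this] have "A = {1..card A}"
      by simp
    with assms(2) show False ..
  qed
  then obtain a where "a \<in> A" "a \<notin> {1..card A}"
    by blast
  then have a: "a \<in> A" "card A < a"
    using assms(1) by auto
  have "\<not> {1..a} \<subseteq> A"
  proof
    assume "{1..a} \<subseteq> A"
    from card_mono[OF fin this] a(2) show False
      by simp
  qed
  then obtain c where "c \<in> {1..a}" "c \<notin> A"
    by blast
  with a(1) show ?thesis
    by (intro that[of c a]) (auto simp: le_less)
qed

lemma exists_hole_below_element_le:
  assumes "A \<subseteq> {1..n}" "card A + 2 \<le> n" "A \<noteq> {1..card A}"
  shows "\<exists>i. 1 \<le> i \<and> i + 2 \<le> n \<and> i \<notin> A \<and> (\<exists>a\<in>A. i < a)"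
proof -
  obtain c a where c: "c \<notin> A" "1 \<le> c" "c < a" and a: "a \<in> A"
    using exists_hole_below_element[OF assms(1,3)] .
  show ?thesis
  proof (cases "c + 2 \<le> n")
    case True
    then show ?thesis
      using a c by blast
  next
    case False
    have "a \<le> n"
      using a assms(1) by auto
    with False c(3) have "c + 1 = n" "a = n"
      by linarith+
    have "card ({1..n} - A) = n - card A"
      using card_Diff_subset[OF finite_subset[OF assms(1)] assms(1)] by simp
    then have "card ({1..n} - A - {c}) \<ge> 1"
      using assms(2) by (auto simp: card_Diff_singleton_if)
    then have "{1..n} - A - {c} \<noteq> {}"
      by (metis card.empty not_one_le_zero)
    then obtain d where d: "d \<in> {1..n}" "d \<notin> A" "d \<noteq> c"
      by blast
    have "d < a"
      using a d(1,2) \<open>a = n\<close> by (cases "d = a") auto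
    moreover have "d + 2 \<le> n"
      using \<open>d < a\<close> \<open>a = n\<close> d(3) \<open>c + 1 = n\<close> by (cases "d + 1 = n") simp_all
    ultimately show ?thesis
      using a d(1,2) by auto
  qed
qed

lemma exists_short_move:
  assumes "A \<subseteq> {1..n}" "card A + 2 \<le> n" "A \<noteq> {1..card A}"
  shows "\<exists>i. 1 \<le> i \<and> i + 2 \<le> n \<and> i \<notin> A \<and> (i + 1 \<in> A \<or> i + 2 \<in> A)"
proof -
  define S where "S = {i. 1 \<le> i \<and> i + 2 \<le> n \<and> i \<notin> A \<and> (\<exists>a\<in>A. i < a)}"
  have "S \<noteq> {}"
    using exists_hole_below_element_le[OF assms] unfolding S_def by blast
  moreover have "finite S"
    unfolding S_def by (rule finite_subset[of _ "{..n}"]) auto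
  ultimately obtain m where "m \<in> S" and m_max: "\<And>x. x \<in> S \<Longrightarrow> x \<le> m"
    using Max_in Max_ge by blast
  then obtain a where m: "1 \<le> m" "m + 2 \<le> n" "m \<notin> A" "a \<in> A" "m < a"
    unfolding S_def by blast
  have "m + 1 \<in> A \<or> m + 2 \<in> A"
  proof (rule ccontr)
    assume gap: "\<not> (m + 1 \<in> A \<or> m + 2 \<in> A)"
    then have "a \<noteq> m + 1" "a \<noteq> m + 2"
      using m(4) by auto
    then have "m + 3 \<le> a"
      using m(5) by linarith
    moreover have "a \<le> n"
      using m(4) assms(1) by auto
    ultimately have "m + 1 \<in> S"
      using gap m(4) unfolding S_def by (auto intro!: bexI[of _ a])
    then show False
      using m_max by fastforce
  qed
  then show ?thesis
    using m by blast
qed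

lemma sum_image_cyc_less:
  assumes "finite A" "i \<notin> A" "i + 1 \<in> A \<or> i + 2 \<in> A"
  shows "\<Sum>(cyc i (i + 2) ` A) < \<Sum>A"
proof -
  have "\<Sum>(cyc i (i + 2) ` A) = sum (cyc i (i + 2)) A"
    by (simp add: sum.reindex inj_on_cyc)
  also have "\<dots> < \<Sum>A"
  proof (rule sum_strict_mono_ex1[OF assms(1)])
    show "\<forall>x\<in>A. cyc i (i + 2) x \<le> x"
      using assms(2) by (auto simp: cyc_def)
    show "\<exists>x\<in>A. cyc i (i + 2) x < x"
    proof (cases "i + 1 \<in> A")
      case True
      then show ?thesis
        by (intro bexI[of _ "i + 1"]) (simp_all add: cyc_def)
    next
      case False
      then show ?thesis
        using assms(3) by (intro bexI[of _ "i + 2"]) (simp_all add: cyc_def)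
    qed
  qed
  finally show ?thesis .
qed

lemma range_move_decreasing:
  assumes "A \<subseteq> {1..n}" "card A + 2 \<le> n" "A \<noteq> {1..card A}"
  shows "\<exists>B. range_move n A B \<and> \<Sum>B < \<Sum>A"
proof -
  obtain i where i: "1 \<le> i" "i + 2 \<le> n" "i \<notin> A" "i + 1 \<in> A \<or> i + 2 \<in> A"
    using exists_short_move[OF assms] by blast
  have "i \<in> {1..n}" "i + 2 \<in> {1..n}" "even (i + (i + 2))"
    using i by auto
  then have "range_move n A (cyc i (i + 2) ` A)"
    unfolding range_move_def using assms(1) i(3) by blast
  moreover have "\<Sum>(cyc i (i + 2) ` A) < \<Sum>A"
    using finite_subset[OF assms(1) finite_atLeastAtMost] i(3,4) by (rule sum_image_cyc_less)
  ultimately show ?thesis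
    by blast
qed

lemma range_moves_to_initial_segment:
  assumes "A \<subseteq> {1..n}" "card A + 2 \<le> n"
  shows "(range_move n)\<^sup>*\<^sup>* A {1..card A}"
  using assms
proof (induction "\<Sum>A" arbitrary: A rule: less_induct)
  case less
  show ?case
  proof (cases "A = {1..card A}")
    case True
    then show ?thesis
      by (metis rtranclp.rtrancl_refl)
  next
    case False
    then obtain B where B: "range_move n A B" "\<Sum>B < \<Sum>A"
      using range_move_decreasing[OF less.prems] by blast
    have "(range_move n)\<^sup>*\<^sup>* B {1..card B}"
      using less.hyps[OF B(2) range_move_subset[OF B(1)]] range_move_card[OF B(1)] less.prems(2)
      by simp
    then show ?thesis
      using B(1) range_move_card[OF B(1)] by (metis converse_rtranclp_into_rtranclp)
  qed
qed

lemma subset_card_eq_pred_Xs: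
  assumes "A \<subseteq> {1..n}" "card A + 1 = n"
  shows "\<exists>i\<in>{1..n}. A = Xs n i"
proof -
  have "card ({1..n} - A) = 1"
    using card_Diff_subset[OF finite_subset[OF assms(1)] assms(1)] assms(2) by simp
  then obtain i where "{1..n} - A = {i}"
    by (rule card_1_singletonE)
  then show ?thesis
    using assms(1) unfolding Xs_def by blast
qed

lemma permutes_eq_off_point:
  assumes "\<sigma> permutes S" "\<tau> permutes S" "\<And>x. x \<in> S \<Longrightarrow> x \<noteq> i \<Longrightarrow> \<sigma> x = \<tau> x"
  shows "\<sigma> = \<tau>"
proof
  fix x
  show "\<sigma> x = \<tau> x"
  proof (cases "x \<in> S")
    case False
    then show ?thesis
      using assms(1,2) by (simp add: permutes_not_in)
  next
    case x: True
    show ?thesis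
    proof (cases "x = i")
      case True
      have "\<sigma> ` (S - {i}) = \<tau> ` (S - {i})"
        using assms(3) by (auto intro: image_cong)
      then have "S - {\<sigma> i} = S - {\<tau> i}"
        using assms(1,2)
        by (simp add: image_set_diff permutes_inj permutes_image)
      moreover have "\<sigma> i \<in> S" "\<tau> i \<in> S"
        using x True assms(1,2) by (simp_all add: permutes_in_image)
      ultimately show ?thesis
        using True by blast
    qed (use x assms(3) in blast)
  qed
qed

lemma POI_small_rank_generated:
  assumes "n \<ge> 2" "\<alpha> \<in> POI n" "card (dom \<alpha>) + 2 \<le> n"
  shows "\<alpha> \<in> generated n (xgens n)"
proof -
  have PI: "\<alpha> \<in> PI n"
    using assms(2) by (simp add: POI_def)
  then have sub: "dom \<alpha> \<subseteq> {1..n}" "ran \<alpha> \<subseteq> {1..n}" and card: "card (ran \<alpha>) = card (dom \<alpha>)"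
    by (auto simp: PI_def card_ran_PI)
  have "(range_move n)\<^sup>*\<^sup>* (dom \<alpha>) {1..card (dom \<alpha>)}"
    using sub(1) assms(3) by (rule range_moves_to_initial_segment)
  moreover have "(range_move n)\<^sup>*\<^sup>* {1..card (dom \<alpha>)} (ran \<alpha>)"
    using range_moves_to_initial_segment[OF sub(2)] assms(3) card
    by (simp add: sympD[OF symp_rtranclp[OF symp_range_move]])
  ultimately obtain \<gamma> where \<gamma>: "\<gamma> \<in> generated n (xgens n)" "dom \<gamma> = dom \<alpha>" "ran \<gamma> = ran \<alpha>"
    using range_moves_generated[OF assms(1) sub(1)] by (meson rtranclp_trans)
  have "\<gamma> \<in> AO n"
    using generated_xgens_AO[OF assms(1)] \<gamma>(1) by blast
  then have "\<alpha> = \<gamma>"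
    using POI_eqI[OF assms(2), of \<gamma>] \<gamma>(2,3) by (simp add: AO_def)
  then show ?thesis
    using \<gamma>(1) by simp
qed

lemma POI_full_rank_eq_pid:
  assumes "\<alpha> \<in> POI n" "card (dom \<alpha>) = n"
  shows "\<alpha> = pid n"
proof (rule POI_eqI[OF assms(1)])
  have PI: "\<alpha> \<in> PI n"
    using assms(1) by (simp add: POI_def)
  show "pid n \<in> POI n"
    using pid_AO by (simp add: AO_def)
  show "dom \<alpha> = dom (pid n)"
    using PI assms(2) card_subset_eq[of "{1..n}" "dom \<alpha>"]
    by (auto simp: PI_def pid_eq_restrict)
  show "ran \<alpha> = ran (pid n)"
    using PI assms(2) card_subset_eq[of "{1..n}" "ran \<alpha>"] card_ran_PI[OF PI]
    by (auto simp: PI_def pid_eq_restrict ran_def restrict_map_def)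
qed

lemma AO_rank_pred_eq_shift_map:
  assumes "\<alpha> \<in> AO n" "card (dom \<alpha>) + 1 = n"
  shows "\<exists>i\<in>{1..n}. \<exists>j\<in>{1..n}. even (i + j) \<and> \<alpha> = shift_map n i j"
proof -
  have POI: "\<alpha> \<in> POI n" and PI: "\<alpha> \<in> PI n"
    using assms(1) by (auto simp: AO_def POI_def)
  obtain i where i: "i \<in> {1..n}" "dom \<alpha> = Xs n i"
    using subset_card_eq_pred_Xs[of "dom \<alpha>" n] PI assms(2) by (auto simp: PI_def)
  obtain j where j: "j \<in> {1..n}" "ran \<alpha> = Xs n j"
    using subset_card_eq_pred_Xs[of "ran \<alpha>" n] PI assms(2) by (auto simp: PI_def card_ran_PI)
  have \<alpha>: "\<alpha> = shift_map n i j"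
    using POI_eqI[OF POI shift_map_POI[OF i(1) j(1)]] i j
    by (simp add: dom_shift_map ran_shift_map)
  obtain \<sigma> where \<sigma>: "\<sigma> permutes {1..n}" "evenperm \<sigma>" "\<forall>x\<in>dom \<alpha>. \<alpha> x = Some (\<sigma> x)"
    using assms(1) by (auto simp: AO_def AI_def)
  have "\<sigma> = cyc i j"
  proof (rule permutes_eq_off_point[OF \<sigma>(1) cyc_permutes[OF i(1) j(1)]])
    fix x assume "x \<in> {1..n}" "x \<noteq> i"
    then have "x \<in> dom \<alpha>" "\<alpha> x = Some (cyc i j x)"
      unfolding i(2) by (simp_all add: Xs_def \<alpha> shift_map_def)
    then show "\<sigma> x = cyc i j x"
      using \<sigma>(3) by simp
  qed
  then have "even (i + j)"
    using \<sigma>(2) evenperm_cyc by blast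
  with i(1) j(1) \<alpha> show ?thesis
    by (intro bexI[of _ i] bexI[of _ j] conjI)
qed

theorem proposition4p7:
  fixes n :: nat
  assumes "n \<ge> 2"
  shows "generated n {xgen n i | i. i \<in> {1..n}} = AO n"
proof
  show "generated n (xgens n) \<subseteq> AO n"
    using assms by (rule generated_xgens_AO)
  show "AO n \<subseteq> generated n (xgens n)"
  proof
    fix \<alpha> assume \<alpha>: "\<alpha> \<in> AO n"
    then have POI: "\<alpha> \<in> POI n"
      by (simp add: AO_def)
    then have "card (dom \<alpha>) \<le> n"
      using card_mono[of "{1..n}" "dom \<alpha>"] by (auto simp: POI_def PI_def)
    then consider "card (dom \<alpha>) + 2 \<le> n" | "card (dom \<alpha>) + 1 = n" | "card (dom \<alpha>) = n"
      by linarith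
    then show "\<alpha> \<in> generated n (xgens n)"
    proof cases
      case 1
      then show ?thesis
        using POI_small_rank_generated[OF assms POI] by blast
    next
      case 2
      then obtain i j where "i \<in> {1..n}" "j \<in> {1..n}" "even (i + j)" "\<alpha> = shift_map n i j"
        using AO_rank_pred_eq_shift_map[OF \<alpha>] by blast
      then show ?thesis
        using shift_map_generated[OF assms] by simp
    next
      case 3
      then show ?thesis
        using POI_full_rank_eq_pid[OF POI] generated.gen_id by simp
    qed
  qed
qed

end
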